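(* Let $p\ge1$ and let $d^{p}_{\mathrm{ERP}}$ be the ERP distance on finite sequences of vectors in $\mathbb{R}^d$. Then: (a) if $\bm A,\bm B$ are sequences of one-hot vectors (rows in $\{0,1\}^d$ with exactly one entry $1$) and $p=\infty$, then $d^{\infty}_{\mathrm{ERP}}(\bm A,\bm B)$ equals the Levenshtein (edit) distance between $\bm A$ and $\bm B$; (b) for all $\bm A\in\mathbb{R}^{m\times d}$, $\bm B\in\mathbb{R}^{n\times d}$: $d^p_{\mathrm{ERP}}(\bm A\oplus\bm0,\bm B)=d^p_{\mathrm{ERP}}(\bm0\oplus\bm A,\bm B)=d^p_{\mathrm{ERP}}(\bm A,\bm B)$, where $\bm0$ is a single zero row; (c) $d^p_{\mathrm{ERP}}(\bm A,\emptyset)=\sum_{i=1}^m\|\bm a_i\|_p$ for all $\bm A\in\mathbb{R}^{m\times d}$; (d) $d^p_{\mathrm{ERP}}(\bm A,\bm B)=d^p_{\mathrm{ERP}}(\bm B,\bm A)$ for all $\bm A,\bm B$; (e) for all $\bm A\in\mathbb{R}^{m\times d}$, $\bm B\in\mathbb{R}^{n\times d}$, $\bm C\in\mathbb{R}^{l\times d}$: $d^p_{\mathrm{ERP}}(\bm A,\bm B)\le d^p_{\mathrm{ERP}}(\bm A,\bm C)+d^p_{\mathrm{ERP}}(\bm C,\bm B)$; (f) $d^p_{\mathrm{ERP}}(\bm A,\bm A\oplus\bm0)=d^p_{\mathrm{ERP}}(\bm A,\bm A)=0$ for all $\bm A\in\mathbb{R}^{m\times d}$ (so $d^p_{\mathrm{ERP}}$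 is not a distance).
   Context: For $\bm A\in\mathbb{R}^{m\times d}$, $\bm B\in\mathbb{R}^{n\times d}$ (rows $\bm a_i,\bm b_i$), $\bm A\oplus\bm B$ is vertical concatenation, $\emptyset$ is the empty sequence, and $\bm A_{2:}$ removes the first row. The ERP distance is defined recursively: $d^p_{\mathrm{ERP}}(\bm A,\emptyset)=\sum_{i=1}^m\|\bm a_i\|_p$, $d^p_{\mathrm{ERP}}(\emptyset,\bm B)=\sum_{i=1}^n\|\bm b_i\|_p$, and otherwise $d^p_{\mathrm{ERP}}(\bm A,\bm B)=\min\{\|\bm a_1\|_p+d^p_{\mathrm{ERP}}(\bm A_{2:},\bm B),\ \|\bm b_1\|_p+d^p_{\mathrm{ERP}}(\bm A,\bm B_{2:}),\ \|\bm a_1-\bm b_1\|_p+d^p_{\mathrm{ERP}}(\bm A_{2:},\bm B_{2:})\}$. The Levenshtein distance is the minimum number of single-element insertions, deletions and substitutions transforming one sequence into the other. *)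

theory Defs
  imports "HOL-Analysis.Analysis" "HOL-Library.Extended_Real"
begin

text \<open>Vectors in R^d are elements of real ^ 'd; a sequence (m x d matrix) is a list of rows.
  The exponent p ranges over extended reals so that p = infinity is allowed.\<close>

fun pnorm :: "ereal \<Rightarrow> real ^ 'd \<Rightarrow> real" where
  "pnorm (ereal r) x = (\<Sum>i\<in>UNIV. \<bar>x $ i\<bar> powr r) powr (1 / r)"
| "pnorm PInfty x = Max (range (\<lambda>i. \<bar>x $ i\<bar>))"
| "pnorm MInfty x = 0"

fun erp :: "ereal \<Rightarrow> (real ^ 'd) list \<Rightarrow> (real ^ 'd) list \<Rightarrow> real" where
  "erp p A [] = (\<Sum>a\<leftarrow>A. pnorm p a)"
| "erp p [] B = (\<Sum>b\<leftarrow>B. pnorm p b)"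
| "erp p (a # A) (b # B) =
     min (pnorm p a + erp p A (b # B))
         (min (pnorm p b + erp p (a # A) B) (pnorm p (a - b) + erp p A B))"

inductive edit_step :: "'a list \<Rightarrow> 'a list \<Rightarrow> bool" where
  del: "edit_step (xs @ x # ys) (xs @ ys)"
| ins: "edit_step (xs @ ys) (xs @ x # ys)"
| sub: "edit_step (xs @ x # ys) (xs @ y # ys)"

definition levenshtein :: "'a list \<Rightarrow> 'a list \<Rightarrow> nat" where
  "levenshtein xs ys = (LEAST n. (edit_step ^^ n) xs ys)"

definition one_hot :: "real ^ 'd \<Rightarrow> bool" where
  "one_hot x \<longleftrightarrow> (\<forall>i. x $ i = 0 \<or> x $ i = 1) \<and> card {i. x $ i = 1} = 1"

end

theory Submission
  imports Defs
begin

text \<open>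
  ERP and the Levenshtein distance are both instances of one weighted edit distance
  \<open>edit_dist w\<close>, in which the gap is the extra symbol \<open>None\<close> and \<open>w\<close> is a cost on
  \<open>'a option\<close>: ERP compares a gap with the zero vector in the p-norm, Levenshtein charges 1
  for every mismatch. For \<open>p \<ge> 1\<close> the p-norm is a seminorm (Minkowski), so the ERP cost is
  a pseudometric, and whenever \<open>w\<close> is a pseudometric so is \<open>edit_dist w\<close>: for the triangle
  inequality, the first moves of optimal alignments of \<open>A, C\<close> and of \<open>C, B\<close> are matched on
  their use of the head of \<open>C\<close> and the rest follows by induction. An element at cost 0 from
  the gap, such as the zero vector, can then be inserted or deleted for free.
  On one-hot vectors the sup-norm of \<open>a - b\<close>, \<open>a\<close> and \<open>b\<close> is 0 or 1 according to equality,
  so ERP with \<open>p = \<infinity>\<close> is the unit-cost edit distance, whose optimal alignments are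
  shortest edit paths.
\<close>

locale pseudometric =
  fixes d :: "'a \<Rightarrow> 'a \<Rightarrow> real"
  assumes refl [simp]: "d x x = 0"
    and sym: "d x y = d y x"
    and triangle: "d x z \<le> d x y + d y z"
begin

lemma nonneg: "0 \<le> d x y"
  using triangle[of x x y] sym[of y x] refl[of x] by linarith

end

fun edit_dist :: "('a option \<Rightarrow> 'a option \<Rightarrow> real) \<Rightarrow> 'a list \<Rightarrow> 'a list \<Rightarrow> real" where
  "edit_dist w A [] = (\<Sum>a\<leftarrow>A. w (Some a) None)"
| "edit_dist w [] B = (\<Sum>b\<leftarrow>B. w None (Some b))"
| "edit_dist w (a # A) (b # B) =
     min (w (Some a) None + edit_dist w A (b # B))
         (min (w None (Some b) + edit_dist w (a # A) B) (w (Some a) (Some b) + edit_dist w A B))"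

lemma edit_dist_Nil_left [simp]: "edit_dist w [] B = (\<Sum>b\<leftarrow>B. w None (Some b))"
  by (cases B) auto

lemma edit_dist_induct [case_names Nil_right Nil_left Cons_Cons]:
  fixes P :: "'a list \<Rightarrow> 'a list \<Rightarrow> bool"
  assumes "\<And>A. P A []" and "\<And>b B. P [] (b # B)"
    and "\<And>a A b B. P A (b # B) \<Longrightarrow> P (a # A) B \<Longrightarrow> P A B \<Longrightarrow> P (a # A) (b # B)"
  shows "P A B"
  by (rule edit_dist.induct[of "\<lambda>_. P"]) (fact assms)+

fun opt_Cons :: "'a option \<Rightarrow> 'a list \<Rightarrow> 'a list" where
  "opt_Cons None xs = xs"
| "opt_Cons (Some x) xs = x # xs"

lemma length_opt_Cons [simp]: "length (opt_Cons u xs) = length xs + (if u = None then 0 else 1)"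
  by (cases u) auto

lemma edit_dist_optimal_move:
  assumes "A \<noteq> [] \<or> B \<noteq> []"
  obtains u v A' B' where "(u, v) \<noteq> (None, None)" "A = opt_Cons u A'" "B = opt_Cons v B'"
    "edit_dist w A B = w u v + edit_dist w A' B'"
proof (cases A)
  case Nil
  with assms obtain b B' where "B = b # B'" by (cases B) auto
  with Nil show thesis using that[of None "Some b" A B'] by simp
next
  case (Cons a A')
  show thesis
  proof (cases B)
    case Nil
    with Cons show thesis using that[of "Some a" None A' B] by simp
  next
    case (Cons b B')
    let ?del = "w (Some a) None + edit_dist w A' B" and ?ins = "w None (Some b) + edit_dist w A B'"
      and ?sub = "w (Some a) (Some b) + edit_dist w A' B'"
    have "edit_dist w A B = min ?del (min ?ins ?sub)"
      using \<open>A = a # A'\<close> Cons by simp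
    then consider "edit_dist w A B = ?del" | "edit_dist w A B = ?ins" | "edit_dist w A B = ?sub"
      by linarith
    then show thesis
      using that[of "Some a" None A' B] that[of None "Some b" A B'] that[of "Some a" "Some b" A' B']
        \<open>A = a # A'\<close> Cons by cases auto
  qed
qed

lemma edit_dist_cong:
  assumes "set A \<subseteq> S" "set B \<subseteq> T"
    and "\<And>u v. set_option u \<subseteq> S \<Longrightarrow> set_option v \<subseteq> T \<Longrightarrow> w u v = w' u v"
  shows "edit_dist w A B = edit_dist w' A B"
  using assms by (induction A B rule: edit_dist_induct) (auto cong: map_cong simp: subset_iff)

context
  fixes w :: "'a option \<Rightarrow> 'a option \<Rightarrow> real"
  assumes w: "pseudometric w"
begin

interpretation w: pseudometric w by (fact w)

lemma edit_dist_opt_Cons_le: "edit_dist w (opt_Cons u A) (opt_Cons v B) \<le> w u v + edit_dist w A B"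
proof (cases u; cases v)
  fix a assume "u = Some a" "v = None"
  then show ?thesis by (cases B) auto
next
  fix b assume "u = None" "v = Some b"
  then show ?thesis by (cases A) auto
qed auto

lemma edit_dist_nonneg: "0 \<le> edit_dist w A B"
  by (induction A B rule: edit_dist_induct) (auto intro!: sum_list_nonneg w.nonneg add_nonneg_nonneg)

lemma edit_dist_sym: "edit_dist w A B = edit_dist w B A"
proof (induction A B rule: edit_dist_induct)
  case (Nil_right A)
  then show ?case by (cases A) (auto simp: w.sym[of None])
qed (auto simp: w.sym min.commute min.left_commute)

lemma edit_dist_self [simp]: "edit_dist w A A = 0"
proof (induction A)
  case (Cons a A)
  have "edit_dist w (a # A) (a # A) \<le> 0"
    using edit_dist_opt_Cons_le[of "Some a" A "Some a" A] Cons by simp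
  then show ?case using edit_dist_nonneg[of "a # A" "a # A"] by linarith
qed simp

lemma edit_dist_common_moves:
  assumes "A \<noteq> [] \<or> C \<noteq> []" "C \<noteq> [] \<or> B \<noteq> []"
  obtains u v x A' C' B' where "A = opt_Cons u A'" "C = opt_Cons v C'" "B = opt_Cons x B'"
    "edit_dist w A C = w u v + edit_dist w A' C'" "edit_dist w C B = w v x + edit_dist w C' B'"
    "length A' + length C' + length B' < length A + length C + length B"
proof -
  obtain u v A' C' where AC: "(u, v) \<noteq> (None, None)" "A = opt_Cons u A'" "C = opt_Cons v C'"
      "edit_dist w A C = w u v + edit_dist w A' C'"
    using assms(1) by (rule edit_dist_optimal_move)
  obtain v' x C'' B' where CB: "(v', x) \<noteq> (None, None)" "C = opt_Cons v' C''" "B = opt_Cons x B'"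
      "edit_dist w C B = w v' x + edit_dist w C'' B'"
    using assms(2) by (rule edit_dist_optimal_move)
  \<comment> \<open>A move leaving \<open>C\<close> untouched is paired with the idle move \<open>(None, None)\<close> on the other side.\<close>
  consider "v = None" | "v' = None" | y where "v = Some y" "v' = Some y" "C'' = C'"
    using AC(3) CB(2) by (cases v; cases v') auto
  then show thesis
  proof cases
    case 1
    then show thesis using that[of u A' None C None B] AC by auto
  next
    case 2
    then show thesis using that[of None A None C x B'] CB by auto
  next
    case 3
    then show thesis using that[of u A' v C' x B'] AC CB by auto
  qed
qed

lemma edit_dist_triangle: "edit_dist w A B \<le> edit_dist w A C + edit_dist w C B"
proof (induction "length A + length C + length B" arbitrary: A B C rule: less_induct)
  case less
  show ?case
  proof (cases "A = [] \<and> C = [] \<or> C = [] \<and> B = []")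
    case True
    then show ?thesis using edit_dist_nonneg[of A C] by auto
  next
    case False
    then obtain u v x A' C' B' where moves: "A = opt_Cons u A'" "C = opt_Cons v C'" "B = opt_Cons x B'"
        "edit_dist w A C = w u v + edit_dist w A' C'" "edit_dist w C B = w v x + edit_dist w C' B'"
        "length A' + length C' + length B' < length A + length C + length B"
      by (metis edit_dist_common_moves)
    have "edit_dist w A B \<le> w u x + edit_dist w A' B'"
      unfolding moves(1,3) by (rule edit_dist_opt_Cons_le)
    also have "\<dots> \<le> (w u v + w v x) + (edit_dist w A' C' + edit_dist w C' B')"
      using w.triangle[of u x v] less[OF moves(6)] by linarith
    finally show ?thesis
      unfolding moves(4,5) by linarith
  qed
qed

lemma edit_dist_append_left_le: "edit_dist w (xs @ A) (xs @ B) \<le> edit_dist w A B"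
proof (induction xs)
  case (Cons x xs)
  then show ?case using edit_dist_opt_Cons_le[of "Some x" "xs @ A" "Some x" "xs @ B"] by simp
qed simp

lemma edit_dist_zero_imp_left_eq:
  assumes "edit_dist w A A' = 0"
  shows "edit_dist w A B = edit_dist w A' B"
  using edit_dist_triangle[of A B A'] edit_dist_triangle[of A' B A] edit_dist_sym[of A A'] assms
  by linarith

lemma edit_dist_Cons_null:
  assumes "w (Some z) None = 0"
  shows "edit_dist w (z # A) B = edit_dist w A B"
proof (rule edit_dist_zero_imp_left_eq)
  show "edit_dist w (z # A) A = 0"
    using edit_dist_opt_Cons_le[of "Some z" A None A] edit_dist_nonneg[of "z # A" A] assms by simp
qed

lemma edit_dist_snoc_null:
  assumes "w (Some z) None = 0"
  shows "edit_dist w (A @ [z]) B = edit_dist w A B"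
proof (rule edit_dist_zero_imp_left_eq)
  show "edit_dist w (A @ [z]) A = 0"
    using edit_dist_append_left_le[of A "[z]" "[]"] edit_dist_nonneg[of "A @ [z]" A] assms by simp
qed

end

lemma edit_step_iff:
  "edit_step X Y \<longleftrightarrow>
     (\<exists>xs u v ys. (u, v) \<noteq> (None, None) \<and> X = xs @ opt_Cons u ys \<and> Y = xs @ opt_Cons v ys)"
proof
  assume "edit_step X Y"
  then show "\<exists>xs u v ys. (u, v) \<noteq> (None, None) \<and> X = xs @ opt_Cons u ys \<and> Y = xs @ opt_Cons v ys"
  proof cases
    case (del xs x ys)
    then have "X = xs @ opt_Cons (Some x) ys \<and> Y = xs @ opt_Cons None ys" by simp
    then show ?thesis by blast
  next
    case (ins xs ys x)
    then have "X = xs @ opt_Cons None ys \<and> Y = xs @ opt_Cons (Some x) ys" by simp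
    then show ?thesis by blast
  next
    case (sub xs x ys y)
    then have "X = xs @ opt_Cons (Some x) ys \<and> Y = xs @ opt_Cons (Some y) ys" by simp
    then show ?thesis by blast
  qed
next
  assume "\<exists>xs u v ys. (u, v) \<noteq> (None, None) \<and> X = xs @ opt_Cons u ys \<and> Y = xs @ opt_Cons v ys"
  then obtain xs u v ys where "(u, v) \<noteq> (None, None)" "X = xs @ opt_Cons u ys" "Y = xs @ opt_Cons v ys"
    by blast
  then show "edit_step X Y"
    by (cases u; cases v) (auto intro: edit_step.intros)
qed

lemma relpowp_edit_step_append_left:
  "(edit_step ^^ n) X Y \<Longrightarrow> (edit_step ^^ n) (zs @ X) (zs @ Y)"
proof (induction n arbitrary: Y)
  case (Suc n)
  then obtain Z where "(edit_step ^^ n) X Z" "edit_step Z Y" by auto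
  moreover have "edit_step (zs @ Z) (zs @ Y)"
    using \<open>edit_step Z Y\<close> unfolding edit_step_iff by (metis append.assoc)
  ultimately show ?case using Suc.IH by (meson relpowp_Suc_I)
qed simp

lemma pseudometric_discrete: "pseudometric (\<lambda>x y. of_bool (x \<noteq> y) :: real)"
  by unfold_locales auto

lemma edit_step_imp_unit_edit_dist_le:
  assumes "edit_step X Y"
  shows "edit_dist (\<lambda>u v. of_bool (u \<noteq> v)) X Y \<le> 1"
proof -
  let ?w = "\<lambda>u v. of_bool (u \<noteq> v) :: real"
  from assms obtain xs u v ys where XY: "X = xs @ opt_Cons u ys" "Y = xs @ opt_Cons v ys"
    unfolding edit_step_iff by blast
  have "edit_dist ?w X Y \<le> edit_dist ?w (opt_Cons u ys) (opt_Cons v ys)"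
    unfolding XY by (rule edit_dist_append_left_le[OF pseudometric_discrete])
  also have "\<dots> \<le> ?w u v + edit_dist ?w ys ys"
    by (rule edit_dist_opt_Cons_le[OF pseudometric_discrete])
  also have "\<dots> \<le> 1"
    by (simp add: edit_dist_self[OF pseudometric_discrete])
  finally show ?thesis .
qed

lemma relpowp_edit_step_imp_unit_edit_dist_le:
  "(edit_step ^^ n) X Y \<Longrightarrow> edit_dist (\<lambda>u v. of_bool (u \<noteq> v)) X Y \<le> n"
proof (induction n arbitrary: Y)
  case 0
  then show ?case by (simp add: edit_dist_self[OF pseudometric_discrete])
next
  case (Suc n)
  then obtain Z where "(edit_step ^^ n) X Z" "edit_step Z Y" by auto
  then show ?case
    using edit_dist_triangle[OF pseudometric_discrete, of X Y Z] Suc.IH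
      edit_step_imp_unit_edit_dist_le by fastforce
qed

lemma unit_edit_dist_attained:
  "\<exists>n. (edit_step ^^ n) A B \<and> real n = edit_dist (\<lambda>u v. of_bool (u \<noteq> v)) A B"
proof (induction "length A + length B" arbitrary: A B rule: less_induct)
  case less
  let ?w = "\<lambda>u v. of_bool (u \<noteq> v) :: real"
  show ?case
  proof (cases "A = [] \<and> B = []")
    case True
    then show ?thesis by auto
  next
    case False
    then obtain u v A' B' where move: "(u, v) \<noteq> (None, None)" "A = opt_Cons u A'" "B = opt_Cons v B'"
        "edit_dist ?w A B = ?w u v + edit_dist ?w A' B'"
      by (metis edit_dist_optimal_move)
    then have "length A' + length B' < length A + length B" by auto
    with less obtain n where n: "(edit_step ^^ n) A' B'" "real n = edit_dist ?w A' B'" by blast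
    have path: "(edit_step ^^ n) (opt_Cons v A') B"
      using relpowp_edit_step_append_left[OF n(1), of "opt_Cons v []"] move(3) by (cases v) auto
    show ?thesis
    proof (cases "u = v")
      case True
      then show ?thesis using path n(2) move by auto
    next
      case False
      have "edit_step A (opt_Cons v A')"
        unfolding edit_step_iff using move(1,2) by (metis append_Nil)
      then have "(edit_step ^^ Suc n) A B" using path by (rule relpowp_Suc_I2)
      moreover have "real (Suc n) = edit_dist ?w A B" using False n(2) move(4) by simp
      ultimately show ?thesis by blast
    qed
  qed
qed

lemma levenshtein_eq_unit_edit_dist:
  "real (levenshtein A B) = edit_dist (\<lambda>u v. of_bool (u \<noteq> v)) A B"
proof -
  obtain n where n: "(edit_step ^^ n) A B" "real n = edit_dist (\<lambda>u v. of_bool (u \<noteq> v)) A B"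
    using unit_edit_dist_attained by blast
  have "levenshtein A B \<le> n"
    unfolding levenshtein_def using n(1) by (rule Least_le)
  moreover have "(edit_step ^^ levenshtein A B) A B"
    unfolding levenshtein_def using n(1) by (rule LeastI)
  ultimately show ?thesis
    using n(2) relpowp_edit_step_imp_unit_edit_dist_le[of "levenshtein A B" A B] by linarith
qed

lemma powr_scale_le:
  fixes t x r :: real
  assumes "0 \<le> t" "t \<le> 1" "0 \<le> x" "1 \<le> r"
  shows "(t * x) powr r \<le> t * x powr r"
proof -
  have "t powr r \<le> t powr 1"
    using assms powr_mono'[of 1 r t] by simp
  then show ?thesis
    using assms by (simp add: powr_mult mult_right_mono)
qed

lemma convex_on_powr_nonneg:
  fixes r :: real
  assumes "1 \<le> r"
  shows "convex_on {0..} (\<lambda>x. x powr r)"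
proof
  fix t x y :: real
  assume t: "0 < t" "t < 1" and xy: "x \<in> {0..}" "y \<in> {0..}"
  consider "x = 0" | "y = 0" | "0 < x" "0 < y"
    using xy by fastforce
  then show "((1 - t) *\<^sub>R x + t *\<^sub>R y) powr r \<le> (1 - t) * x powr r + t * y powr r"
  proof cases
    case 1
    then show ?thesis using powr_scale_le[of t y r] t xy assms by simp
  next
    case 2
    then show ?thesis using powr_scale_le[of "1 - t" x r] t xy assms by simp
  next
    case 3
    then show ?thesis using convex_onD[OF powr_convex[OF assms], of t x y] t by simp
  qed
qed (rule convex_real_interval)

lemma minkowski_sum_powr:
  fixes f g :: "'i \<Rightarrow> real"
  assumes I: "finite I" and r: "1 \<le> r"
  defines "s \<equiv> (\<Sum>i\<in>I. \<bar>f i\<bar> powr r) powr (1 / r)"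
    and "t \<equiv> (\<Sum>i\<in>I. \<bar>g i\<bar> powr r) powr (1 / r)"
  shows "(\<Sum>i\<in>I. \<bar>f i + g i\<bar> powr r) powr (1 / r) \<le> s + t"
proof -
  have sum_zero_iff: "(\<Sum>i\<in>I. \<bar>h i\<bar> powr r) powr (1 / r) = 0 \<longleftrightarrow> (\<forall>i\<in>I. h i = 0)" for h :: "'i \<Rightarrow> real"
    using I by (simp add: sum_nonneg_eq_0_iff)
  have s_pow: "s powr r = (\<Sum>i\<in>I. \<bar>f i\<bar> powr r)" and t_pow: "t powr r = (\<Sum>i\<in>I. \<bar>g i\<bar> powr r)"
    unfolding s_def t_def using r by (simp_all add: powr_powr sum_nonneg)
  consider "s = 0" | "t = 0" | "0 < s" "0 < t"
    unfolding s_def t_def by fastforce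
  then show ?thesis
  proof cases
    case 1
    then show ?thesis unfolding t_def using sum_zero_iff[of f] s_def by simp
  next
    case 2
    then show ?thesis unfolding s_def using sum_zero_iff[of g] t_def by simp
  next
    case 3
    define l where "l = t / (s + t)"
    have l: "0 \<le> l" "l \<le> 1" "1 - l = s / (s + t)"
      using 3 by (auto simp: l_def field_simps)
    have pointwise: "\<bar>f i + g i\<bar> powr r
        \<le> (s + t) powr r * ((1 - l) * (\<bar>f i\<bar> / s) powr r + l * (\<bar>g i\<bar> / t) powr r)" for i
    proof -
      have "\<bar>f i\<bar> + \<bar>g i\<bar> = (s + t) * ((1 - l) * (\<bar>f i\<bar> / s) + l * (\<bar>g i\<bar> / t))"
        using 3 unfolding l(3) by (simp add: l_def distrib_left)
      then have "\<bar>f i + g i\<bar> powr r \<le> ((s + t) * ((1 - l) * (\<bar>f i\<bar> / s) + l * (\<bar>g i\<bar> / t))) powr r"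
        using r by (metis abs_ge_zero abs_triangle_ineq order.trans powr_mono2 zero_le_one)
      also have "\<dots> = (s + t) powr r * ((1 - l) * (\<bar>f i\<bar> / s) + l * (\<bar>g i\<bar> / t)) powr r"
        using 3 l by (simp add: powr_mult)
      also have "\<dots> \<le> (s + t) powr r * ((1 - l) * (\<bar>f i\<bar> / s) powr r + l * (\<bar>g i\<bar> / t) powr r)"
        using convex_onD[OF convex_on_powr_nonneg[OF r], of l "\<bar>f i\<bar> / s" "\<bar>g i\<bar> / t"] 3 l
        by (intro mult_left_mono) auto
      finally show ?thesis .
    qed
    have "(\<Sum>i\<in>I. \<bar>f i + g i\<bar> powr r)
        \<le> (\<Sum>i\<in>I. (s + t) powr r * ((1 - l) * (\<bar>f i\<bar> / s) powr r + l * (\<bar>g i\<bar> / t) powr r))"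
      by (intro sum_mono pointwise)
    also have "\<dots> = (s + t) powr r * ((1 - l) * ((\<Sum>i\<in>I. \<bar>f i\<bar> powr r) / s powr r)
        + l * ((\<Sum>i\<in>I. \<bar>g i\<bar> powr r) / t powr r))"
      by (simp add: powr_divide sum_divide_distrib sum_distrib_left distrib_left sum.distrib)
    also have "\<dots> = (s + t) powr r"
      using 3 unfolding s_pow[symmetric] t_pow[symmetric] by simp
    finally have "(\<Sum>i\<in>I. \<bar>f i + g i\<bar> powr r) powr (1 / r) \<le> ((s + t) powr r) powr (1 / r)"
      using r by (intro powr_mono2) (auto intro: sum_nonneg)
    then show ?thesis
      using 3 r by (simp add: powr_powr)
  qed
qed

lemma pnorm_infinity [simp]: "pnorm \<infinity> x = Max (range (\<lambda>i. \<bar>x $ i\<bar>))"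
  using pnorm.simps(2) by simp

lemma pnorm_minus_infinity [simp]: "pnorm (-\<infinity>) x = 0"
  using pnorm.simps(3) by simp

lemma pnorm_zero [simp]: "pnorm p 0 = 0"
  by (cases p) auto

lemma pnorm_uminus [simp]: "pnorm p (- x) = pnorm p x"
  by (cases p) auto

lemma pnorm_infinity_triangle: "pnorm \<infinity> (x + y) \<le> pnorm \<infinity> x + pnorm \<infinity> y"
proof -
  have bound: "\<bar>z $ i\<bar> \<le> pnorm \<infinity> z" for z :: "real ^ 'd" and i
    by simp
  have "\<bar>(x + y) $ i\<bar> \<le> pnorm \<infinity> x + pnorm \<infinity> y" for i
    using abs_triangle_ineq[of "x $ i" "y $ i"] bound[of x i] bound[of y i]
    by (simp only: vector_add_component)
  then show ?thesis
    unfolding pnorm_infinity[of "x + y"] by (intro Max.boundedI) auto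
qed

lemma pnorm_triangle:
  assumes "1 \<le> p"
  shows "pnorm p (x + y) \<le> pnorm p x + pnorm p y"
proof (cases p)
  case (real r)
  then show ?thesis using assms minkowski_sum_powr[of UNIV r "\<lambda>i. x $ i" "\<lambda>i. y $ i"] by simp
next
  case PInf
  then show ?thesis using pnorm_infinity_triangle by simp
qed (use assms in simp)

definition erp_cost :: "ereal \<Rightarrow> (real ^ 'd) option \<Rightarrow> (real ^ 'd) option \<Rightarrow> real" where
  "erp_cost p u v = pnorm p (case_option 0 id u - case_option 0 id v)"

lemma erp_eq_edit_dist: "erp p A B = edit_dist (erp_cost p) A B"
  by (induction p A B rule: erp.induct) (simp_all add: erp_cost_def)

lemma pseudometric_erp_cost:
  assumes "1 \<le> p"
  shows "pseudometric (erp_cost p)"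
proof
  fix u v x :: "(real ^ 'd) option"
  show "erp_cost p u u = 0" by (simp add: erp_cost_def)
  show "erp_cost p u v = erp_cost p v u"
    using pnorm_uminus[of p "case_option 0 id v - case_option 0 id u"] by (simp add: erp_cost_def)
  show "erp_cost p u x \<le> erp_cost p u v + erp_cost p v x"
    using pnorm_triangle[OF assms, of "case_option 0 id u - case_option 0 id v" "case_option 0 id v - case_option 0 id x"]
    by (simp add: erp_cost_def)
qed

lemma pnorm_infinity_unit_entries:
  assumes "\<And>i. \<bar>x $ i\<bar> \<in> {0, 1}"
  shows "pnorm \<infinity> x = of_bool (x \<noteq> 0)"
proof (cases "x = 0")
  case False
  then obtain i where "x $ i \<noteq> 0" by (auto simp: vec_eq_iff)
  with assms[of i] have "\<bar>x $ i\<bar> = 1" by auto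
  moreover have "\<bar>x $ j\<bar> \<le> 1" for j using assms[of j] by auto
  ultimately show ?thesis using False by (auto intro!: Max_eqI)
qed simp

lemma one_hot_nonzero: "one_hot a \<Longrightarrow> a \<noteq> 0"
  unfolding one_hot_def by (auto simp: card_1_singleton_iff)

lemma erp_cost_infinity_one_hot:
  fixes u v :: "(real ^ 'd) option"
  assumes "\<forall>a\<in>set_option u. one_hot a" "\<forall>b\<in>set_option v. one_hot b"
  shows "erp_cost \<infinity> u v = of_bool (u \<noteq> v)"
proof -
  let ?x = "case_option 0 id u - case_option 0 id v :: real ^ 'd"
  have "(case_option 0 id u :: real ^ 'd) $ i \<in> {0, 1}" "(case_option 0 id v :: real ^ 'd) $ i \<in> {0, 1}" for i
    using assms unfolding one_hot_def by (auto split: option.split)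
  moreover have "\<bar>a - b\<bar> \<in> {0, 1}" if "a \<in> {0, 1}" "b \<in> {0, 1}" for a b :: real
    using that by auto
  ultimately have "pnorm \<infinity> ?x = of_bool (?x \<noteq> 0)"
    by (intro pnorm_infinity_unit_entries) simp
  moreover have "?x = 0 \<longleftrightarrow> u = v"
    using assms one_hot_nonzero by (cases u; cases v) auto
  ultimately show ?thesis
    unfolding erp_cost_def by simp
qed

lemma erp_infinity_one_hot:
  assumes "\<forall>a\<in>set A. one_hot a" "\<forall>b\<in>set B. one_hot b"
  shows "erp \<infinity> A B = real (levenshtein A B)"
  unfolding erp_eq_edit_dist levenshtein_eq_unit_edit_dist
  using assms by (intro edit_dist_cong[of A "set A" B "set B"] erp_cost_infinity_one_hot) auto

theorem lemma1:
  fixes p :: ereal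
  assumes "p \<ge> 1"
  shows "(\<forall>A B :: (real ^ 'd) list. (\<forall>a\<in>set A. one_hot a) \<longrightarrow> (\<forall>b\<in>set B. one_hot b) \<longrightarrow>
            erp \<infinity> A B = real (levenshtein A B))
   \<and> (\<forall>A B :: (real ^ 'd) list. erp p (A @ [0]) B = erp p A B \<and> erp p (0 # A) B = erp p A B)
   \<and> (\<forall>A :: (real ^ 'd) list. erp p A [] = (\<Sum>a\<leftarrow>A. pnorm p a))
   \<and> (\<forall>A B :: (real ^ 'd) list. erp p A B = erp p B A)
   \<and> (\<forall>A B C :: (real ^ 'd) list. erp p A B \<le> erp p A C + erp p C B)
   \<and> (\<forall>A :: (real ^ 'd) list. erp p A (A @ [0]) = 0 \<and> erp p A A = 0)"
proof -
  note w = pseudometric_erp_cost[OF assms]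
  have gap0: "erp_cost p (Some 0) None = 0"
    by (simp add: erp_cost_def)
  show ?thesis
  proof (intro conjI allI impI)
    fix A B C :: "(real ^ 'd) list"
    show "erp \<infinity> A B = real (levenshtein A B)" if "\<forall>a\<in>set A. one_hot a" "\<forall>b\<in>set B. one_hot b"
      using that by (rule erp_infinity_one_hot)
    show "erp p A [] = (\<Sum>a\<leftarrow>A. pnorm p a)"
      by simp
    show "erp p A B = erp p B A"
      unfolding erp_eq_edit_dist by (rule edit_dist_sym[OF w])
    show "erp p A B \<le> erp p A C + erp p C B"
      unfolding erp_eq_edit_dist by (rule edit_dist_triangle[OF w])
    show "erp p (A @ [0]) B = erp p A B" "erp p (0 # A) B = erp p A B"
      "erp p A A = 0" "erp p A (A @ [0]) = 0"
      unfolding erp_eq_edit_dist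
      by (simp_all add: edit_dist_snoc_null[OF w gap0] edit_dist_Cons_null[OF w gap0]
          edit_dist_self[OF w] edit_dist_sym[OF w, of A "A @ [0]"])
  qed
qed

end
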